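(* Let $a$ and $b$ be relatively prime integers with $1<a<b$ and $S=\langle a,b\rangle$. Let $i\in\{1,\dots,a-1\}$ with $I_{i,a}(S)\neq\varnothing$ and let $h_i=\min I_{i,a}(S)$. If $n$ is the smallest positive integer such that $h_i+na\in b\mathbb{N}$, then $I_{i,a}(S)=\{h_i,h_i+a,\dots,h_i+(n-1)a\}$.
   Context: $\mathbb{N}$ is the set of nonnegative integers, $b\mathbb{N}=\{bk:k\in\mathbb{N}\}$, and $\langle a,b\rangle=\{\lambda_1a+\lambda_2b:\lambda_1,\lambda_2\in\mathbb{N}\}$. $I(S)$ is the set of isolated gaps of $S$ ($x\in\mathbb{N}\setminus S$ with $x-1,x+1\in S$), and $I_{i,a}(S)=\{s\in I(S):s\equiv i\pmod a\}$. *)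

theory Defs
  imports Main
begin

definition gen2 :: "nat \<Rightarrow> nat \<Rightarrow> nat set" where
  "gen2 a b = {l1 * a + l2 * b | l1 l2. True}"

definition isolated_gaps :: "nat set \<Rightarrow> nat set" where
  "isolated_gaps S = {x. x \<notin> S \<and> x \<ge> 1 \<and> x - 1 \<in> S \<and> x + 1 \<in> S}"

definition isolated_gaps_mod :: "nat \<Rightarrow> nat \<Rightarrow> nat set \<Rightarrow> nat set" where
  "isolated_gaps_mod i a S = {s \<in> isolated_gaps S. s mod a = i mod a}"

end

theory Submission
  imports Defs
begin

(* Write S = <a,b> and let h be an element outside S.  If h + k a = l1 a + l2 b lies in S, then
   l2 b > h (else h itself would be in S) and l2 b == h (mod a), so l2 b = h + q a with 0 < q <= k.
   Hence h + k a lies in S exactly when k is at least the least positive n with b | h + n a.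
   Adding multiples of a preserves membership in S, so as long as h + k a stays outside S it is
   again an isolated gap; and every isolated gap in the residue class of h is of the form h + k a
   with k < n. *)

lemma gen2_add_mult_left: "x \<in> gen2 a b \<Longrightarrow> x + k * a \<in> gen2 a b"
  unfolding gen2_def by clarsimp (metis add.commute add.left_commute distrib_right)

lemma dvd_right_in_gen2: "b dvd x \<Longrightarrow> x \<in> gen2 a b"
  unfolding gen2_def by (auto elim!: dvdE intro: exI[of _ 0])

lemma not_in_gen2_add_mult_leftE:
  fixes a b h k :: nat
  assumes "0 < a" and "h \<notin> gen2 a b" and "h + k * a \<in> gen2 a b"
  obtains q where "0 < q" and "q \<le> k" and "b dvd h + q * a"
proof -
  obtain l1 l2 where sum: "h + k * a = l1 * a + l2 * b"
    using assms(3) unfolding gen2_def by auto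
  then have "(h + k * a) mod a = (l2 * b + l1 * a) mod a"
    by (simp add: add.commute)
  then have cong: "(l2 * b) mod a = h mod a"
    by simp
  have below: "h < l2 * b"
  proof (rule ccontr)
    assume "\<not> h < l2 * b"
    then obtain s where "h = l2 * b + a * s"
      using mod_eq_nat2E[OF cong] by (metis not_less)
    then have "h \<in> gen2 a b"
      unfolding gen2_def by (auto simp: mult.commute intro: exI[of _ s])
    with assms(2) show False ..
  qed
  then obtain q where q: "l2 * b = h + a * q"
    using mod_eq_nat1E[OF cong] by (metis less_imp_le)
  have "0 < q"
    using below q by simp
  moreover have "q \<le> k"
  proof -
    have "k * a = (l1 + q) * a"
      using sum q by (simp add: algebra_simps)
    with assms(1) show ?thesis by simp
  qed
  moreover have "b dvd h + q * a"
    using q by (metis dvd_triv_right mult.commute)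
  ultimately show thesis by (rule that)
qed

lemma add_mult_left_in_gen2_iff:
  fixes a b h k n :: nat
  assumes "0 < a" and "h \<notin> gen2 a b" and "b dvd h + n * a"
    and "\<And>m. 0 < m \<Longrightarrow> m < n \<Longrightarrow> \<not> b dvd h + m * a"
  shows "h + k * a \<in> gen2 a b \<longleftrightarrow> n \<le> k"
proof
  assume "h + k * a \<in> gen2 a b"
  with assms(1,2) obtain q where "0 < q" "q \<le> k" "b dvd h + q * a"
    by (rule not_in_gen2_add_mult_leftE)
  with assms(4) show "n \<le> k"
    by (meson le_trans not_le)
next
  assume "n \<le> k"
  then have "h + k * a = (h + n * a) + (k - n) * a"
    by (simp add: diff_mult_distrib)
  then show "h + k * a \<in> gen2 a b"
    using gen2_add_mult_left dvd_right_in_gen2 assms(3) by metis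
qed

lemma isolated_gaps_gen2_add_mult_left:
  assumes "x \<in> isolated_gaps (gen2 a b)" and "x + k * a \<notin> gen2 a b"
  shows "x + k * a \<in> isolated_gaps (gen2 a b)"
proof -
  have "x - 1 + k * a \<in> gen2 a b" and "x + 1 + k * a \<in> gen2 a b"
    using assms(1) gen2_add_mult_left unfolding isolated_gaps_def by blast+
  moreover have "x - 1 + k * a = x + k * a - 1" and "x + 1 + k * a = x + k * a + 1"
    using assms(1) unfolding isolated_gaps_def by auto
  ultimately show ?thesis
    using assms unfolding isolated_gaps_def by auto
qed

lemma isolated_gaps_mod_gen2_from_least:
  fixes a b h i n :: nat
  assumes "0 < a" and h: "h \<in> isolated_gaps_mod i a (gen2 a b)"
    and least: "\<And>x. x \<in> isolated_gaps_mod i a (gen2 a b) \<Longrightarrow> h \<le> x"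
    and "b dvd h + n * a" and "\<And>m. 0 < m \<Longrightarrow> m < n \<Longrightarrow> \<not> b dvd h + m * a"
  shows "isolated_gaps_mod i a (gen2 a b) = {h + k * a | k. k < n}"
proof -
  have h_gap: "h \<in> isolated_gaps (gen2 a b)" and h_mod: "h mod a = i mod a"
    using h unfolding isolated_gaps_mod_def by auto
  then have "h \<notin> gen2 a b"
    unfolding isolated_gaps_def by simp
  then have in_gen2_iff: "h + k * a \<in> gen2 a b \<longleftrightarrow> n \<le> k" for k
    using add_mult_left_in_gen2_iff assms(1,4,5) by blast
  have "x \<in> isolated_gaps_mod i a (gen2 a b) \<longleftrightarrow> (\<exists>k<n. x = h + k * a)" for x
  proof
    assume x: "x \<in> isolated_gaps_mod i a (gen2 a b)"
    then have "h \<le> x" and "x mod a = h mod a" and "x \<notin> gen2 a b"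
      using least h_mod unfolding isolated_gaps_mod_def isolated_gaps_def by auto
    then obtain k where "x = h + k * a"
      by (metis mod_eq_nat1E mult.commute)
    with \<open>x \<notin> gen2 a b\<close> show "\<exists>k<n. x = h + k * a"
      using in_gen2_iff not_le by blast
  next
    assume "\<exists>k<n. x = h + k * a"
    then obtain k where "k < n" and x: "x = h + k * a"
      by blast
    then have "x \<in> isolated_gaps (gen2 a b)"
      using h_gap in_gen2_iff isolated_gaps_gen2_add_mult_left by simp
    moreover have "x mod a = i mod a"
      using x h_mod by simp
    ultimately show "x \<in> isolated_gaps_mod i a (gen2 a b)"
      unfolding isolated_gaps_mod_def by simp
  qed
  then show ?thesis
    by blast
qed

theorem lemma4p6:
  fixes a b i n :: nat
  assumes "coprime a b" and "1 < a" and "a < b"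
    and "1 \<le> i" and "i \<le> a - 1"
    and "isolated_gaps_mod i a (gen2 a b) \<noteq> {}"
    and "0 < n" and "b dvd (LEAST x. x \<in> isolated_gaps_mod i a (gen2 a b)) + n * a"
    and "\<And>m. 0 < m \<Longrightarrow> m < n \<Longrightarrow>
           \<not> b dvd (LEAST x. x \<in> isolated_gaps_mod i a (gen2 a b)) + m * a"
  shows "isolated_gaps_mod i a (gen2 a b) =
           {(LEAST x. x \<in> isolated_gaps_mod i a (gen2 a b)) + k * a | k. k < n}"
proof -
  define h where "h = (LEAST x. x \<in> isolated_gaps_mod i a (gen2 a b))"
  have "h \<in> isolated_gaps_mod i a (gen2 a b)"
    unfolding h_def using assms(6) LeastI_ex ex_in_conv by metis
  moreover have "h \<le> x" if "x \<in> isolated_gaps_mod i a (gen2 a b)" for x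
    unfolding h_def using that by (rule Least_le)
  ultimately show ?thesis
    using isolated_gaps_mod_gen2_from_least[of a h i b n] assms(2,8,9)
    unfolding h_def by simp
qed

end
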